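(* Let $\mathcal{Q}$, $\mathcal{S}$, $p_1,\dots,p_4$ be as in the context. If $\mathcal{Q}$ has no base points in $\mathbb{P}^2(\mathbb{K})$, then $\gcd(p_1,p_2,p_3,p_4)=1$.
   Context: $\mathbb{K}$ is an algebraically closed field of characteristic zero and $\Sigma\subset\mathbb{P}^3(\mathbb{K})$ a surface. $\mathcal{Q}=(q_1:\cdots:q_4)$ is a rational parametrization of $\Sigma$ ($q_i\in\mathbb{K}[t_1,t_2,t_3]$ homogeneous of the same degree, $\gcd(q_1,\dots,q_4)=1$, image dense in $\Sigma$). $\mathcal{S}=(s_1:s_2:s_3):\mathbb{P}^2(\mathbb{K})\dashrightarrow\mathbb{P}^2(\mathbb{K})$ is a dominant rational map with $s_i$ homogeneous of the same degree and $\gcd(s_1,s_2,s_3)=1$. $p_i=q_i(s_1,s_2,s_3)$ for $i=1,\dots,4$. A base point of $\mathcal{Q}$ is a point $A\in\mathbb{P}^2(\mathbb{K})$ with $q_1(A)=\cdots=q_4(A)=0$. *)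

theory Defs
  imports "HOL-Computational_Algebra.Computational_Algebra"
begin

text \<open>Polynomials in K[t1,t2,t3] are represented as nested univariate polynomials
  ('a poly poly poly): the outermost variable is t3, the middle one t2, the innermost t1.
  Polynomials in K[x1,..,x4] are represented as 'a poly poly poly poly (outermost x4).
  Points of projective space are represented by nonzero coordinate vectors.\<close>

type_synonym 'a mpoly3 = "'a poly poly poly"
type_synonym 'a mpoly4 = "'a poly poly poly poly"

definition eval3 :: "'a::comm_ring_1 mpoly3 \<Rightarrow> 'a \<times> 'a \<times> 'a \<Rightarrow> 'a" where
  "eval3 q a = (case a of (a1, a2, a3) \<Rightarrow>
      poly (poly (poly q [:[:a3:]:]) [:a2:]) a1)"

definition eval4 :: "'a::comm_ring_1 mpoly4 \<Rightarrow> 'a \<times> 'a \<times> 'a \<times> 'a \<Rightarrow> 'a" where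
  "eval4 F y = (case y of (y1, y2, y3, y4) \<Rightarrow>
      poly (poly (poly (poly F [:[:[:y4:]:]:]) [:[:y3:]:]) [:y2:]) y1)"

text \<open>Homogeneous of total degree d (the zero polynomial is homogeneous of every degree).\<close>
definition hom3 :: "nat \<Rightarrow> 'a::zero mpoly3 \<Rightarrow> bool" where
  "hom3 d q \<longleftrightarrow> (\<forall>i j k. coeff (coeff (coeff q k) j) i \<noteq> 0 \<longrightarrow> i + j + k = d)"

definition hom4 :: "nat \<Rightarrow> 'a::zero mpoly4 \<Rightarrow> bool" where
  "hom4 d F \<longleftrightarrow> (\<forall>i j k l. coeff (coeff (coeff (coeff F l) k) j) i \<noteq> 0 \<longrightarrow> i + j + k + l = d)"

definition compose3 :: "'a::comm_ring_1 mpoly3 \<Rightarrow> 'a mpoly3 \<Rightarrow> 'a mpoly3 \<Rightarrow> 'a mpoly3 \<Rightarrow> 'a mpoly3" where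
  "compose3 q s1 s2 s3 =
     poly (map_poly (\<lambda>q2. poly (map_poly (\<lambda>q1. poly (map_poly (\<lambda>c. [:[:[:c:]:]:]) q1) s1) q2) s2) q) s3"

text \<open>A surface in P^3: the zero set of a nonconstant homogeneous polynomial
  (as a set of nonzero coordinate vectors, i.e. the punctured affine cone).\<close>
definition is_surface :: "('a::comm_ring_1 \<times> 'a \<times> 'a \<times> 'a) set \<Rightarrow> bool" where
  "is_surface \<Sigma> \<longleftrightarrow> (\<exists>F d. d \<ge> 1 \<and> F \<noteq> 0 \<and> hom4 d F \<and>
      \<Sigma> = {y. y \<noteq> (0, 0, 0, 0) \<and> eval4 F y = 0})"

definition image4 :: "'a::comm_ring_1 mpoly3 \<Rightarrow> 'a mpoly3 \<Rightarrow> 'a mpoly3 \<Rightarrow> 'a mpoly3 \<Rightarrow> ('a \<times> 'a \<times> 'a \<times> 'a) set" where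
  "image4 q1 q2 q3 q4 = {(eval3 q1 A, eval3 q2 A, eval3 q3 A, eval3 q4 A) | A.
      A \<noteq> (0, 0, 0) \<and> (eval3 q1 A, eval3 q2 A, eval3 q3 A, eval3 q4 A) \<noteq> (0, 0, 0, 0)}"

definition image3 :: "'a::comm_ring_1 mpoly3 \<Rightarrow> 'a mpoly3 \<Rightarrow> 'a mpoly3 \<Rightarrow> ('a \<times> 'a \<times> 'a) set" where
  "image3 s1 s2 s3 = {(eval3 s1 A, eval3 s2 A, eval3 s3 A) | A.
      A \<noteq> (0, 0, 0) \<and> (eval3 s1 A, eval3 s2 A, eval3 s3 A) \<noteq> (0, 0, 0)}"

text \<open>Zariski density of a set of points in a closed set of P^3 (closed sets are common zero
  sets of homogeneous polynomials).\<close>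
definition zariski_dense_in4 :: "('a::comm_ring_1 \<times> 'a \<times> 'a \<times> 'a) set \<Rightarrow> ('a \<times> 'a \<times> 'a \<times> 'a) set \<Rightarrow> bool" where
  "zariski_dense_in4 X \<Sigma> \<longleftrightarrow> X \<subseteq> \<Sigma> \<and>
     (\<forall>G d. hom4 d G \<longrightarrow> (\<forall>y\<in>X. eval4 G y = 0) \<longrightarrow> (\<forall>y\<in>\<Sigma>. eval4 G y = 0))"

text \<open>Dominant rational map P^2 --> P^2: its image is Zariski dense in P^2, i.e. no nonzero
  homogeneous polynomial vanishes on the whole image.\<close>
definition dominant3 :: "'a::comm_ring_1 mpoly3 \<Rightarrow> 'a mpoly3 \<Rightarrow> 'a mpoly3 \<Rightarrow> bool" where
  "dominant3 s1 s2 s3 \<longleftrightarrow>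
     (\<forall>G d. hom3 d G \<longrightarrow> G \<noteq> 0 \<longrightarrow> (\<exists>x\<in>image3 s1 s2 s3. eval3 G x \<noteq> 0))"

definition base_point :: "'a::comm_ring_1 mpoly3 \<Rightarrow> 'a mpoly3 \<Rightarrow> 'a mpoly3 \<Rightarrow> 'a mpoly3 \<Rightarrow> 'a \<times> 'a \<times> 'a \<Rightarrow> bool" where
  "base_point q1 q2 q3 q4 A \<longleftrightarrow> A \<noteq> (0, 0, 0) \<and>
     eval3 q1 A = 0 \<and> eval3 q2 A = 0 \<and> eval3 q3 A = 0 \<and> eval3 q4 A = 0"

end

theory Submission
  imports Defs "HOL-Computational_Algebra.Field_as_Ring"
begin

(* If an irreducible h divided every p_i = q_i(s1,s2,s3), then at each zero A of h the q_i
  vanish at (s1(A), s2(A), s3(A)); as Q has no base points, s1, s2, s3 vanish on the whole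
  hypersurface h = 0, so by the Nullstellensatz for hypersurfaces h divides each s_j,
  contradicting gcd(s1,s2,s3) = 1.  Nor can all p_i be 0, as s would then vanish identically.
  The Nullstellensatz (h irreducible and g zero on V(h) implies h | g) is proved by adjoining
  one variable at a time: for h in R[x] of positive degree not dividing g, Bezout over the
  fraction field of R gives a h + b g = r with r a nonzero element of R; at a point A where
  r lc(h) does not vanish, the specialisation of h has a root x, where a h + b g would vanish. *)

(* Bezout coefficients in Frac(R)[x] need a gcd structure on the fraction field. *)
instantiation fract :: (idom)
  "{unique_euclidean_ring, normalization_euclidean_semiring, normalization_semidom_multiplicative}"
begin
definition [simp]: "normalize_fract = (normalize_field :: 'a fract \<Rightarrow> _)"
definition [simp]: "unit_factor_fract = (unit_factor_field :: 'a fract \<Rightarrow> _)"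
definition [simp]: "modulo_fract = (mod_field :: 'a fract \<Rightarrow> _)"
definition [simp]: "euclidean_size_fract = (euclidean_size_field :: 'a fract \<Rightarrow> _)"
definition [simp]: "division_segment (x :: 'a fract) = 1"
instance
  by standard (simp_all add: dvd_field_iff field_split_simps split: if_splits)
end

instantiation fract :: (idom) euclidean_ring_gcd
begin
definition gcd_fract :: "'a fract \<Rightarrow> 'a fract \<Rightarrow> 'a fract" where
  "gcd_fract = Euclidean_Algorithm.gcd"
definition lcm_fract :: "'a fract \<Rightarrow> 'a fract \<Rightarrow> 'a fract" where
  "lcm_fract = Euclidean_Algorithm.lcm"
definition Gcd_fract :: "'a fract set \<Rightarrow> 'a fract" where
  "Gcd_fract = Euclidean_Algorithm.Gcd"
definition Lcm_fract :: "'a fract set \<Rightarrow> 'a fract" where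
  "Lcm_fract = Euclidean_Algorithm.Lcm"
instance by standard (simp_all add: gcd_fract_def lcm_fract_def Gcd_fract_def Lcm_fract_def)
end

instance fract :: (idom) field_gcd ..

lemma irreducible_field_poly_bezout:
  fixes p q :: "'a::field_gcd poly"
  assumes "irreducible p" "\<not> p dvd q"
  obtains a b where "a * p + b * q = 1"
proof -
  have "coprime p q"
    using assms by (simp add: irreducible_imp_prime_elem prime_elem_imp_coprime)
  then show thesis
    using that bezout_coefficients_fst_snd[of p q] by simp
qed

lemma fract_poly_clear_denominators:
  fixes P :: "'a::{factorial_ring_gcd,semiring_gcd_mult_normalize} fract poly"
  obtains d p where "d \<noteq> 0" "smult (to_fract d) P = fract_poly p"
proof -
  obtain c p where P: "P = smult c (fract_poly p)"
    by (rule content_decompose_fract)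
  obtain n d where c: "c = Fract n d" "d \<noteq> 0"
    by (cases c)
  have "smult (to_fract d) P = fract_poly (smult n p)"
    using c by (simp add: P Fract_conv_to_fract)
  with c(2) show thesis by (rule that)
qed

lemma irreducible_poly_bezout_const:
  fixes h g :: "'a::{factorial_ring_gcd,semiring_gcd_mult_normalize} poly"
  assumes "irreducible h" "degree h > 0" "\<not> h dvd g"
  obtains a b r where "r \<noteq> 0" "a * h + b * g = [:r:]"
proof -
  have irr: "irreducible (fract_poly h)" and content: "content h = 1"
    using nonconst_poly_irreducible_iff[of h] assms by auto
  have "\<not> fract_poly h dvd fract_poly g"
    using fract_poly_dvdD[OF _ content] assms(3) by blast
  then obtain A B where AB: "A * fract_poly h + B * fract_poly g = 1"
    using irreducible_field_poly_bezout[OF irr] by blast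
  obtain dA a where a: "dA \<noteq> 0" "smult (to_fract dA) A = fract_poly a"
    by (rule fract_poly_clear_denominators)
  obtain dB b where b: "dB \<noteq> 0" "smult (to_fract dB) B = fract_poly b"
    by (rule fract_poly_clear_denominators)
  have "fract_poly (smult dB a * h + smult dA b * g)
      = smult (to_fract (dA * dB)) (A * fract_poly h + B * fract_poly g)"
    by (simp add: a(2)[symmetric] b(2)[symmetric] algebra_simps smult_add_right)
  also have "\<dots> = fract_poly [:dA * dB:]"
    using AB by (simp add: map_poly_pCons)
  finally have "smult dB a * h + smult dA b * g = [:dA * dB:]"
    by (simp only: fract_poly_eq_iff)
  moreover have "dA * dB \<noteq> 0" using a b by simp
  ultimately show thesis using that by blast
qed

definition is_ring_hom :: "('a::comm_ring_1 \<Rightarrow> 'b::comm_ring_1) \<Rightarrow> bool" where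
  "is_ring_hom f \<longleftrightarrow> f 1 = 1 \<and> (\<forall>x y. f (x + y) = f x + f y) \<and> (\<forall>x y. f (x * y) = f x * f y)"

lemma is_ring_homD:
  assumes "is_ring_hom f"
  shows is_ring_hom_0: "f 0 = 0"
    and is_ring_hom_1: "f 1 = 1"
    and is_ring_hom_add: "f (x + y) = f x + f y"
    and is_ring_hom_mult: "f (x * y) = f x * f y"
proof -
  show "f (x + y) = f x + f y" "f 1 = 1" "f (x * y) = f x * f y"
    using assms by (simp_all add: is_ring_hom_def)
  have "f (0 + 0) = f 0 + f 0"
    using assms by (simp only: is_ring_hom_def)
  then show "f 0 = 0"
    by simp
qed

lemma is_ring_hom_dvd_eq_0:
  assumes "is_ring_hom f" "x dvd y" "f x = 0"
  shows "f y = 0"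
  using assms by (auto simp: is_ring_hom_mult elim!: dvdE)

lemma map_poly_hom_add:
  assumes "is_ring_hom f"
  shows "map_poly f (p + q) = map_poly f p + map_poly f q"
  by (rule poly_eqI) (simp add: coeff_map_poly is_ring_homD[OF assms])

lemma map_poly_hom_mult:
  assumes "is_ring_hom f"
  shows "map_poly f (p * q) = map_poly f p * map_poly f q"
proof (induction p)
  case (pCons a p)
  have "map_poly f (pCons a p * q) = map_poly f (smult a q + pCons 0 (p * q))"
    by simp
  also have "\<dots> = smult (f a) (map_poly f q) + pCons 0 (map_poly f p * map_poly f q)"
    by (simp add: map_poly_hom_add[OF assms] map_poly_smult map_poly_pCons
        is_ring_homD[OF assms] pCons.IH)
  also have "\<dots> = map_poly f (pCons a p) * map_poly f q"
    by (simp add: map_poly_pCons is_ring_hom_0[OF assms])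
  finally show ?case .
qed simp

lemma is_ring_hom_poly: "is_ring_hom (\<lambda>p. poly p x)"
  by (simp add: is_ring_hom_def)

lemma is_ring_hom_poly_map_poly:
  assumes "is_ring_hom f"
  shows "is_ring_hom (\<lambda>p. poly (map_poly f p) x)"
  using assms by (simp add: is_ring_hom_def map_poly_hom_add map_poly_hom_mult)

lemma is_ring_hom_poly_commute:
  assumes "is_ring_hom f"
  shows "f (poly p c) = poly (map_poly f p) (f c)"
  by (induction p) (simp_all add: map_poly_pCons is_ring_homD[OF assms])

(* An evaluation family ev gives the value ev x A of x at the point A; eval_ext extends it
  to one more variable, with points (A, x). *)
definition eval_ext :: "('r::zero \<Rightarrow> 'p \<Rightarrow> 'a::comm_semiring_1) \<Rightarrow> 'r poly \<Rightarrow> 'p \<times> 'a \<Rightarrow> 'a" where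
  "eval_ext ev p P = poly (map_poly (\<lambda>c. ev c (fst P)) p) (snd P)"

lemma eval_ext_Pair: "eval_ext ev p (A, x) = poly (map_poly (\<lambda>c. ev c A) p) x"
  by (simp add: eval_ext_def)

definition has_nullstellensatz ::
    "('r::{factorial_ring_gcd,semiring_gcd_mult_normalize} \<Rightarrow> 'p \<Rightarrow> 'a::field) \<Rightarrow> bool" where
  "has_nullstellensatz ev \<longleftrightarrow>
     (\<forall>A. is_ring_hom (\<lambda>x. ev x A)) \<and>
     (\<forall>x. x \<noteq> 0 \<longrightarrow> (\<exists>A. ev x A \<noteq> 0)) \<and>
     (\<forall>h g. irreducible h \<longrightarrow> (\<forall>A. ev h A = 0 \<longrightarrow> ev g A = 0) \<longrightarrow> h dvd g)"

lemma has_nullstellensatzD: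
  assumes "has_nullstellensatz ev"
  shows has_nullstellensatz_hom: "is_ring_hom (\<lambda>x. ev x A)"
    and has_nullstellensatz_nonzero: "x \<noteq> 0 \<Longrightarrow> \<exists>A. ev x A \<noteq> 0"
    and has_nullstellensatz_dvd:
      "irreducible h \<Longrightarrow> (\<And>A. ev h A = 0 \<Longrightarrow> ev g A = 0) \<Longrightarrow> h dvd g"
  using assms unfolding has_nullstellensatz_def by blast+

context
  fixes ev :: "'r::{factorial_ring_gcd,semiring_gcd_mult_normalize} \<Rightarrow> 'p \<Rightarrow> 'a::field_char_0"
  assumes ns: "has_nullstellensatz ev"
begin

lemma eval_ext_hom: "is_ring_hom (\<lambda>p. eval_ext ev p P)"
  unfolding eval_ext_def
  by (rule is_ring_hom_poly_map_poly[OF has_nullstellensatz_hom[OF ns]])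

lemma eval_coeff_eq_0_if_eval_ext_vanishes:
  assumes "\<And>x. eval_ext ev p (A, x) = 0"
  shows "ev (coeff p n) A = 0"
proof -
  have "map_poly (\<lambda>c. ev c A) p = 0"
    using assms poly_all_0_iff_0 by (auto simp: eval_ext_Pair)
  then show ?thesis
    using coeff_map_poly[of "\<lambda>c. ev c A" p n] is_ring_hom_0[OF has_nullstellensatz_hom[OF ns]]
    by simp
qed

lemma eval_ext_nonzero:
  assumes "p \<noteq> 0"
  shows "\<exists>P. eval_ext ev p P \<noteq> 0"
proof -
  have "lead_coeff p \<noteq> 0"
    using assms by simp
  then obtain A where "ev (lead_coeff p) A \<noteq> 0"
    using has_nullstellensatz_nonzero[OF ns] by blast
  then show ?thesis
    using eval_coeff_eq_0_if_eval_ext_vanishes by blast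
qed

lemma eval_ext_const: "eval_ext ev [:c:] P = ev c (fst P)"
  using is_ring_hom_0[OF has_nullstellensatz_hom[OF ns]] by (simp add: eval_ext_def map_poly_pCons)

lemma eval_ext_dvd_const:
  assumes "irreducible h" "degree h = 0"
    and "\<And>P. eval_ext ev h P = 0 \<Longrightarrow> eval_ext ev g P = 0"
  shows "h dvd g"
proof -
  define c where "c = coeff h 0"
  have h: "h = [:c:]"
    using assms(2) by (simp add: c_def degree_0_id)
  have "c dvd coeff g n" for n
  proof (rule has_nullstellensatz_dvd[OF ns])
    show "irreducible c"
      using assms(1) h irreducible_const_poly_iff by metis
    fix A
    assume "ev c A = 0"
    then have "eval_ext ev g (A, x) = 0" for x
      using assms(3) eval_ext_const h by (metis fst_conv)
    then show "ev (coeff g n) A = 0"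
      by (rule eval_coeff_eq_0_if_eval_ext_vanishes)
  qed
  then show ?thesis
    using h const_poly_dvd_iff by metis
qed

lemma eval_ext_dvd_nonconst:
  assumes alg_closed: "\<forall>f :: 'a poly. degree f > 0 \<longrightarrow> (\<exists>x. poly f x = 0)"
    and "irreducible h" "degree h > 0"
    and vanish: "\<And>P. eval_ext ev h P = 0 \<Longrightarrow> eval_ext ev g P = 0"
  shows "h dvd g"
proof (rule ccontr)
  assume "\<not> h dvd g"
  then obtain a b r where r: "r \<noteq> 0" and bezout: "a * h + b * g = [:r:]"
    using irreducible_poly_bezout_const[OF assms(2,3)] by blast
  have hom: "is_ring_hom (\<lambda>x. ev x A)" for A
    by (rule has_nullstellensatz_hom[OF ns])
  have "r * lead_coeff h \<noteq> 0"
    using r assms(2) by auto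
  then obtain A where "ev (r * lead_coeff h) A \<noteq> 0"
    using has_nullstellensatz_nonzero[OF ns] by blast
  then have r_A: "ev r A \<noteq> 0" and lc_A: "ev (lead_coeff h) A \<noteq> 0"
    by (simp_all add: is_ring_hom_mult[OF hom])
  \<comment> \<open>the specialisation of \<open>h\<close> at \<open>A\<close> keeps its degree, so it has a root \<open>x\<close>\<close>
  have "degree (map_poly (\<lambda>c. ev c A) h) = degree h"
    using lc_A by (rule map_poly_degree_eq)
  then obtain x where "poly (map_poly (\<lambda>c. ev c A) h) x = 0"
    using alg_closed assms(3) by (metis (no_types, lifting))
  then have h_x: "eval_ext ev h (A, x) = 0"
    by (simp add: eval_ext_Pair)
  then have "eval_ext ev (a * h + b * g) (A, x) = 0"
    using vanish[OF h_x] by (simp only: is_ring_homD[OF eval_ext_hom] mult_zero_right add_0)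
  then show False
    using bezout eval_ext_const r_A by simp
qed

lemma has_nullstellensatz_eval_ext:
  assumes "\<forall>f :: 'a poly. degree f > 0 \<longrightarrow> (\<exists>x. poly f x = 0)"
  shows "has_nullstellensatz (eval_ext ev)"
  unfolding has_nullstellensatz_def
  using eval_ext_hom eval_ext_nonzero eval_ext_dvd_const eval_ext_dvd_nonconst[OF assms]
  by blast

end

(* A field is the ring of polynomials in no variables, with the single point (). *)
definition const_eval :: "'a \<Rightarrow> unit \<Rightarrow> 'a" where
  "const_eval c u = c"

lemma has_nullstellensatz_const_eval: "has_nullstellensatz (const_eval :: 'a::field_gcd \<Rightarrow> _)"
proof -
  have "\<not> irreducible (c :: 'a)" for c
    by (cases "c = 0") (auto simp: irreducible_def dvd_field_iff)
  then show ?thesis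
    by (auto simp: has_nullstellensatz_def const_eval_def is_ring_hom_def)
qed

lemma has_nullstellensatz_reindex:
  assumes "has_nullstellensatz ev" "surj \<phi>"
  shows "has_nullstellensatz (\<lambda>x B. ev x (\<phi> B))"
  using assms unfolding has_nullstellensatz_def surj_def by metis

lemma eval3_nested:
  "eval3 q (a1, a2, a3) = poly (map_poly (\<lambda>c. poly (map_poly (\<lambda>d. poly d a1) c) a2) q) a3"
proof -
  have inner: "poly (poly c [:a2:]) a1 = poly (map_poly (\<lambda>d. poly d a1) c) a2" for c
    using is_ring_hom_poly_commute[OF is_ring_hom_poly, of c "[:a2:]" a1] by simp
  have hom: "is_ring_hom (\<lambda>c. poly (poly c [:a2:]) a1)"
    by (simp add: is_ring_hom_def)
  show ?thesis
    using is_ring_hom_poly_commute[OF hom, of q "[:[:a3:]:]"] by (simp add: eval3_def inner)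
qed

lemma has_nullstellensatz_eval3:
  assumes alg_closed: "\<forall>f :: 'a poly. degree f > 0 \<longrightarrow> (\<exists>x. poly f x = 0)"
  shows "has_nullstellensatz (eval3 :: 'a::{field_char_0,field_gcd} mpoly3 \<Rightarrow> _)"
proof -
  define ev where "ev = eval_ext (eval_ext (eval_ext (const_eval :: 'a \<Rightarrow> _)))"
  define \<phi> :: "'a \<times> 'a \<times> 'a \<Rightarrow> ((unit \<times> 'a) \<times> 'a) \<times> 'a"
    where "\<phi> = (\<lambda>(a1, a2, a3). ((((), a1), a2), a3))"
  have "has_nullstellensatz ev"
    unfolding ev_def
    by (intro has_nullstellensatz_eval_ext has_nullstellensatz_const_eval alg_closed)
  moreover have "surj \<phi>"
    by (rule surjI[of _ "\<lambda>(((u, a1), a2), a3). (a1, a2, a3)"]) (auto simp: \<phi>_def)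
  moreover have "eval3 = (\<lambda>q B. ev q (\<phi> B))"
    by (auto simp: fun_eq_iff ev_def \<phi>_def eval_ext_Pair const_eval_def eval3_nested)
  ultimately show ?thesis
    using has_nullstellensatz_reindex by metis
qed

lemma is_ring_hom_eval3: "is_ring_hom (\<lambda>q. eval3 q A)"
  by (cases A) (simp add: is_ring_hom_def eval3_def)

lemma eval3_compose3:
  "eval3 (compose3 q s1 s2 s3) A = eval3 q (eval3 s1 A, eval3 s2 A, eval3 s3 A)"
proof -
  define ev where "ev x = eval3 x A" for x :: "'a mpoly3"
  have hom: "is_ring_hom ev"
    unfolding ev_def by (rule is_ring_hom_eval3)
  have ev_map_poly: "ev (poly (map_poly f p) s) = poly (map_poly (\<lambda>c. ev (f c)) p) (ev s)"
    if "f 0 = 0" for f :: "'b::zero \<Rightarrow> 'a mpoly3" and p s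
    using is_ring_hom_poly_commute[OF hom] that is_ring_hom_0[OF hom]
    by (simp add: map_poly_map_poly o_def)
  have "ev [:[:[:c:]:]:] = c" for c
    by (cases A) (simp add: ev_def eval3_def)
  then show ?thesis
    by (simp add: compose3_def ev_map_poly eval3_nested flip: ev_def)
qed

lemma gcd_compose3_eq_1:
  fixes q1 q2 q3 q4 s1 s2 s3 :: "'a::{field_char_0,field_gcd} mpoly3"
  assumes alg_closed: "\<forall>f :: 'a poly. degree f > 0 \<longrightarrow> (\<exists>x. poly f x = 0)"
    and s_coprime: "gcd (gcd s1 s2) s3 = 1"
    and no_base: "\<not> (\<exists>A. base_point q1 q2 q3 q4 A)"
  shows "gcd (gcd (gcd (compose3 q1 s1 s2 s3) (compose3 q2 s1 s2 s3))
               (compose3 q3 s1 s2 s3)) (compose3 q4 s1 s2 s3) = 1"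
    (is "?G = 1")
proof -
  note ns = has_nullstellensatz_eval3[OF alg_closed]
  have s_vanish: "eval3 s1 A = 0 \<and> eval3 s2 A = 0 \<and> eval3 s3 A = 0"
    if "eval3 (compose3 q1 s1 s2 s3) A = 0" "eval3 (compose3 q2 s1 s2 s3) A = 0"
       "eval3 (compose3 q3 s1 s2 s3) A = 0" "eval3 (compose3 q4 s1 s2 s3) A = 0" for A
    using that no_base by (auto simp: eval3_compose3 base_point_def)
  have no_prime_divisor: "\<not> p dvd ?G" if "prime p" for p
  proof
    assume "p dvd ?G"
    then have "p dvd compose3 q s1 s2 s3" if "q \<in> {q1, q2, q3, q4}" for q
      using that by (auto intro: dvd_trans)
    then have "eval3 (compose3 q s1 s2 s3) A = 0"
      if "eval3 p A = 0" "q \<in> {q1, q2, q3, q4}" for q A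
      using that is_ring_hom_dvd_eq_0[OF is_ring_hom_eval3] by blast
    then have "p dvd s1 \<and> p dvd s2 \<and> p dvd s3"
      using s_vanish has_nullstellensatz_dvd[OF ns] \<open>prime p\<close>
      by (simp add: prime_elem_imp_irreducible)
    then have "p dvd 1"
      by (simp flip: s_coprime)
    with \<open>prime p\<close> show False
      by simp
  qed
  have "?G \<noteq> 0"
  proof
    assume "?G = 0"
    then have "eval3 s1 A = 0 \<and> eval3 s2 A = 0 \<and> eval3 s3 A = 0" for A
      using s_vanish by (simp add: eval3_def)
    moreover have "s1 \<noteq> 0 \<or> s2 \<noteq> 0 \<or> s3 \<noteq> 0"
      using s_coprime by auto
    ultimately show False
      using has_nullstellensatz_nonzero[OF ns] by blast
  qed
  then show ?thesis
    using no_prime_divisor by (metis prime_divisorE is_unit_gcd_iff)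
qed

(* Only algebraic closedness, gcd(s1,s2,s3) = 1 and the absence of base points are used. *)
theorem theorem4p4:
  fixes q1 q2 q3 q4 s1 s2 s3 :: "'a::{field_char_0, field_gcd} mpoly3"
    and \<Sigma> :: "('a \<times> 'a \<times> 'a \<times> 'a) set"
  assumes alg_closed: "\<forall>f :: 'a poly. degree f > 0 \<longrightarrow> (\<exists>x. poly f x = 0)"
    and surface: "is_surface \<Sigma>"
    and q_hom: "\<exists>d. hom3 d q1 \<and> hom3 d q2 \<and> hom3 d q3 \<and> hom3 d q4"
    and q_gcd: "gcd (gcd (gcd q1 q2) q3) q4 = 1"
    and q_dense: "zariski_dense_in4 (image4 q1 q2 q3 q4) \<Sigma>"
    and s_hom: "\<exists>e. hom3 e s1 \<and> hom3 e s2 \<and> hom3 e s3"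
    and s_gcd: "gcd (gcd s1 s2) s3 = 1"
    and s_dom: "dominant3 s1 s2 s3"
    and no_base: "\<not> (\<exists>A. base_point q1 q2 q3 q4 A)"
  shows "gcd (gcd (gcd (compose3 q1 s1 s2 s3) (compose3 q2 s1 s2 s3))
               (compose3 q3 s1 s2 s3)) (compose3 q4 s1 s2 s3) = 1"
  using alg_closed s_gcd no_base by (rule gcd_compose3_eq_1)

end
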